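(* Let $Y$ be a Young diagram with row lengths $a_1\ge\cdots\ge a_m\ge0$, let $P\subseteq (C\times S)\cup(R\times S)\cup(R\times C)$, and let $1\le i<j\le a_1$. Let $P'=\phi_{c_i,c_j}(P)$. Then (1) $|P'|=|P|$, and (2) if $P$ is a 2-cover of $H(Y)$, then so is $P'$.
   Context: $H(Y)$ has vertex sides $R=\{r_1,\dots,r_m\}$, $C=\{c_1,\dots,c_{a_1}\}$, $S=\{s_1,\dots,s_{a_1}\}$ and edges $\{r_\ell,c_a,s_b\}$ for $1\le\ell\le m$, $1\le a,b\le a_\ell$. For disjoint $A,B$, $A\times B$ is the set of pairs $\{x,y\}$ with $x\in A,y\in B$. A 2-cover of $H(Y)$ is a set of pairs such that every edge of $H(Y)$ contains one of them. Given $P$, let $Q=P\cap(C\times S)$, $W=P\cap(R\times C)$, $N_Q(c)=\{s\in S: cs\in Q\}$, $N_W(c)=\{r\in R: rc\in W\}$, and for an integer $t$ let $L_t=\{r_\ell\in R: a_\ell<t\}$. The shifting $\phi_{c_i,c_j}(P)$ (for $i<j$) is obtained from $P$ by deleting all pairs of $P$ containing $c_i$ or $c_j$ and adding the pairs $\{c_i\}\times(N_Q(c_i)\cup N_Q(c_j))$, $\{c_j\}\times(N_Q(c_i)\cap N_Q(c_j))$, $\{c_i\}\times\big(N_W(c_i)\cap(N_W(c_j)\cup L_j)\big)$, and $\{c_j\}\times\big(N_W(c_j)\cup(N_W(c_i)\setminus L_j)\big)$. *)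

theory Defs
  imports Main
begin

text \<open>Vertices of H(Y): r_l, c_a, s_b (indices start at 1).\<close>
datatype vertex = Rv nat | Cv nat | Sv nat

definition Rset :: "nat \<Rightarrow> vertex set" where
  "Rset m = Rv ` {1..m}"

definition Cset :: "(nat \<Rightarrow> nat) \<Rightarrow> vertex set" where
  "Cset a = Cv ` {1..a 1}"

definition Sset :: "(nat \<Rightarrow> nat) \<Rightarrow> vertex set" where
  "Sset a = Sv ` {1..a 1}"

text \<open>A \<times> B as the set of unordered pairs {x,y} with x in A, y in B.\<close>
definition pairs :: "vertex set \<Rightarrow> vertex set \<Rightarrow> vertex set set" where
  "pairs A B = {{x, y} | x y. x \<in> A \<and> y \<in> B}"

definition HY_edges :: "nat \<Rightarrow> (nat \<Rightarrow> nat) \<Rightarrow> vertex set set" where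
  "HY_edges m a = {{Rv l, Cv x, Sv y} | l x y.
      1 \<le> l \<and> l \<le> m \<and> 1 \<le> x \<and> x \<le> a l \<and> 1 \<le> y \<and> y \<le> a l}"

definition two_cover :: "nat \<Rightarrow> (nat \<Rightarrow> nat) \<Rightarrow> vertex set set \<Rightarrow> bool" where
  "two_cover m a P \<longleftrightarrow> (\<forall>e \<in> HY_edges m a. \<exists>p \<in> P. p \<subseteq> e)"

definition NQ :: "(nat \<Rightarrow> nat) \<Rightarrow> vertex set set \<Rightarrow> vertex \<Rightarrow> vertex set" where
  "NQ a P c = {s \<in> Sset a. {c, s} \<in> P \<inter> pairs (Cset a) (Sset a)}"

definition NW :: "nat \<Rightarrow> (nat \<Rightarrow> nat) \<Rightarrow> vertex set set \<Rightarrow> vertex \<Rightarrow> vertex set" where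
  "NW m a P c = {r \<in> Rset m. {r, c} \<in> P \<inter> pairs (Rset m) (Cset a)}"

definition Lt :: "nat \<Rightarrow> (nat \<Rightarrow> nat) \<Rightarrow> nat \<Rightarrow> vertex set" where
  "Lt m a t = {Rv l | l. 1 \<le> l \<and> l \<le> m \<and> a l < t}"

definition shift :: "nat \<Rightarrow> (nat \<Rightarrow> nat) \<Rightarrow> nat \<Rightarrow> nat \<Rightarrow> vertex set set \<Rightarrow> vertex set set" where
  "shift m a i j P =
     {p \<in> P. Cv i \<notin> p \<and> Cv j \<notin> p}
     \<union> pairs {Cv i} (NQ a P (Cv i) \<union> NQ a P (Cv j))
     \<union> pairs {Cv j} (NQ a P (Cv i) \<inter> NQ a P (Cv j))
     \<union> pairs {Cv i} (NW m a P (Cv i) \<inter> (NW m a P (Cv j) \<union> Lt m a j))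
     \<union> pairs {Cv j} (NW m a P (Cv j) \<union> (NW m a P (Cv i) - Lt m a j))"

end

theory Submission
  imports Defs
begin

text \<open>
  Pairs avoiding \<open>c\<^sub>i\<close> and \<open>c\<^sub>j\<close> are untouched, and the pairs through \<open>c\<^sub>i\<close> (resp. \<open>c\<^sub>j\<close>)
  form a star \<open>{c\<^sub>i} \<times> X\<^sub>i\<close> with \<open>X\<^sub>i = N\<^sub>Q(c\<^sub>i) \<union> N\<^sub>W(c\<^sub>i)\<close>. The shift replaces
  \<open>(X\<^sub>i, X\<^sub>j)\<close> by two sets with the same union and the same intersection (the \<open>S\<close>- and
  \<open>R\<close>-parts are disjoint and are treated separately), so the number of pairs is unchanged.
  An edge \<open>{r\<^sub>l, c\<^sub>x, s\<^sub>b}\<close> with \<open>x \<in> {i, j}\<close> has \<open>i \<le> a\<^sub>l\<close>, so its companion edge through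
  \<open>c\<^sub>i\<close> is covered by \<open>P\<close>, and so is the one through \<open>c\<^sub>j\<close> unless \<open>a\<^sub>l < j\<close>, i.e. \<open>r\<^sub>l \<in> L\<^sub>j\<close>.
\<close>

lemma pairs_singleton: "pairs {c} X = (\<lambda>x. {c, x}) ` X"
  unfolding pairs_def by auto

lemma card_pairs_singleton:
  assumes "c \<notin> X"
  shows "card (pairs {c} X) = card X"
proof -
  have "inj_on (\<lambda>x. {c, x}) X"
    using assms by (auto simp: inj_on_def doubleton_eq_iff)
  then show ?thesis
    unfolding pairs_singleton by (rule card_image)
qed

lemma finite_pairs:
  assumes "finite A" "finite B"
  shows "finite (pairs A B)"
proof -
  have "pairs A B = (\<lambda>(x, y). {x, y}) ` (A \<times> B)"
    unfolding pairs_def by auto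
  then show ?thesis
    using assms by simp
qed

lemma card_Un_two_stars:
  assumes "finite K" "finite X" "finite Y" "u \<noteq> v"
    and "u \<notin> X \<union> Y" "v \<notin> X \<union> Y"
    and "\<forall>p \<in> K. u \<notin> p \<and> v \<notin> p"
  shows "card (K \<union> pairs {u} X \<union> pairs {v} Y) = card K + card X + card Y"
proof -
  have "K \<inter> pairs {u} X = {}" "(K \<union> pairs {u} X) \<inter> pairs {v} Y = {}"
    using assms(4,5,7) unfolding pairs_singleton by (auto simp: doubleton_eq_iff)
  then show ?thesis
    using assms(1-3,5,6)
    by (simp add: card_Un_disjoint card_pairs_singleton finite_pairs)
qed

lemma card_add_eq_if_Un_Int_eq:
  assumes "finite A" "finite B" "A' \<union> B' = A \<union> B" "A' \<inter> B' = A \<inter> B"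
  shows "card A' + card B' = card A + card B"
proof -
  have "finite A'" "finite B'"
    using assms(1-3) by (metis finite_Un)+
  then show ?thesis
    using assms by (metis card_Un_Int)
qed

lemma vertex_notin_sides [simp]:
  "Rv l \<notin> Cset a" "Rv l \<notin> Sset a" "Cv x \<notin> Rset m" "Cv x \<notin> Sset a" "Sv y \<notin> Rset m" "Sv y \<notin> Cset a"
  by (auto simp: Rset_def Cset_def Sset_def)

lemma Rset_Int_Sset: "Rset m \<inter> Sset a = {}"
  by (auto simp: Rset_def Sset_def)

lemma shift_memI:
  "p \<in> P \<Longrightarrow> Cv i \<notin> p \<Longrightarrow> Cv j \<notin> p \<Longrightarrow> p \<in> shift m a i j P"
  "s \<in> NQ a P (Cv i) \<union> NQ a P (Cv j) \<Longrightarrow> {Cv i, s} \<in> shift m a i j P"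
  "s \<in> NQ a P (Cv i) \<inter> NQ a P (Cv j) \<Longrightarrow> {Cv j, s} \<in> shift m a i j P"
  "r \<in> NW m a P (Cv i) \<inter> (NW m a P (Cv j) \<union> Lt m a j) \<Longrightarrow> {r, Cv i} \<in> shift m a i j P"
  "r \<in> NW m a P (Cv j) \<union> (NW m a P (Cv i) - Lt m a j) \<Longrightarrow> {r, Cv j} \<in> shift m a i j P"
  unfolding shift_def pairs_def by (blast intro: insert_commute)+

lemma mem_pairs_imageE:
  assumes "p \<in> pairs (f ` A) (g ` B)"
  obtains x y where "p = {f x, g y}"
  using assms unfolding pairs_def by blast

locale tripartite_pairs =
  fixes m :: nat and a :: "nat \<Rightarrow> nat" and P :: "vertex set set"
  assumes P_sub: "P \<subseteq> pairs (Cset a) (Sset a) \<union> pairs (Rset m) (Sset a) \<union> pairs (Rset m) (Cset a)"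
begin

lemma finite_P: "finite P"
  using P_sub by (rule finite_subset) (simp add: finite_pairs Rset_def Cset_def Sset_def)

lemma mem_PE:
  assumes "p \<in> P"
  obtains x y where "p = {Cv x, Sv y}" | x y where "p = {Rv x, Sv y}" | x y where "p = {Rv x, Cv y}"
proof -
  have "p \<in> pairs (Cv ` {1..a 1}) (Sv ` {1..a 1}) \<or> p \<in> pairs (Rv ` {1..m}) (Sv ` {1..a 1})
      \<or> p \<in> pairs (Rv ` {1..m}) (Cv ` {1..a 1})"
    using assms P_sub unfolding Rset_def Cset_def Sset_def by blast
  then show thesis
    using that by (elim disjE mem_pairs_imageE)
qed

lemma mem_P_subset_vertices: "p \<in> P \<Longrightarrow> p \<subseteq> Rset m \<union> Cset a \<union> Sset a"
  using P_sub unfolding pairs_def by blast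

lemma mem_NQ_iff: "Sv y \<in> NQ a P (Cv x) \<longleftrightarrow> {Cv x, Sv y} \<in> P"
proof
  assume xy: "{Cv x, Sv y} \<in> P"
  then have "Cv x \<in> Cset a" "Sv y \<in> Sset a"
    using mem_P_subset_vertices[OF xy] by auto
  with xy show "Sv y \<in> NQ a P (Cv x)"
    unfolding NQ_def pairs_def by blast
qed (simp add: NQ_def)

lemma mem_NW_iff: "Rv l \<in> NW m a P (Cv x) \<longleftrightarrow> {Rv l, Cv x} \<in> P"
proof
  assume lx: "{Rv l, Cv x} \<in> P"
  then have "Rv l \<in> Rset m" "Cv x \<in> Cset a"
    using mem_P_subset_vertices[OF lx] by auto
  with lx show "Rv l \<in> NW m a P (Cv x)"
    unfolding NW_def pairs_def by blast
qed (simp add: NW_def)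

lemma star_eq_pairs_neighbours:
  "{p \<in> P. Cv x \<in> p} = pairs {Cv x} (NQ a P (Cv x) \<union> NW m a P (Cv x))"
proof (intro equalityI subsetI)
  fix p assume "p \<in> {p \<in> P. Cv x \<in> p}"
  then have p: "p \<in> P" "Cv x \<in> p" by auto
  then show "p \<in> pairs {Cv x} (NQ a P (Cv x) \<union> NW m a P (Cv x))"
    unfolding pairs_singleton
    by (elim mem_PE) (use p in \<open>auto simp: mem_NQ_iff mem_NW_iff image_iff doubleton_eq_iff\<close>)
next
  fix p assume "p \<in> pairs {Cv x} (NQ a P (Cv x) \<union> NW m a P (Cv x))"
  moreover have "NQ a P (Cv x) \<subseteq> range Sv" "NW m a P (Cv x) \<subseteq> range Rv"
    unfolding NQ_def NW_def Sset_def Rset_def by auto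
  ultimately show "p \<in> {p \<in> P. Cv x \<in> p}"
    unfolding pairs_singleton by (auto simp: mem_NQ_iff mem_NW_iff insert_commute)
qed

lemma card_shift:
  assumes "i \<noteq> j"
  shows "card (shift m a i j P) = card P"
proof -
  define Qi Qj Wi Wj L
    where "Qi = NQ a P (Cv i)" and "Qj = NQ a P (Cv j)"
      and "Wi = NW m a P (Cv i)" and "Wj = NW m a P (Cv j)" and "L = Lt m a j"
  define K where "K = {p \<in> P. Cv i \<notin> p \<and> Cv j \<notin> p}"
  define Xi Xj Xi' Xj'
    where "Xi = Qi \<union> Wi" and "Xj = Qj \<union> Wj"
      and "Xi' = (Qi \<union> Qj) \<union> (Wi \<inter> (Wj \<union> L))" and "Xj' = (Qi \<inter> Qj) \<union> (Wj \<union> (Wi - L))"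
  have P_eq: "P = K \<union> pairs {Cv i} Xi \<union> pairs {Cv j} Xj"
    using star_eq_pairs_neighbours[of i] star_eq_pairs_neighbours[of j]
    unfolding K_def Xi_def Xj_def Qi_def Qj_def Wi_def Wj_def by blast
  have shift_eq: "shift m a i j P = K \<union> pairs {Cv i} Xi' \<union> pairs {Cv j} Xj'"
    unfolding shift_def K_def Xi'_def Xj'_def Qi_def Qj_def Wi_def Wj_def L_def pairs_singleton
    by blast
  have Q: "Qi \<union> Qj \<subseteq> Sset a" and W: "Wi \<union> Wj \<subseteq> Rset m"
    unfolding Qi_def Qj_def Wi_def Wj_def NQ_def NW_def by auto
  have X: "Xi \<union> Xj \<subseteq> Rset m \<union> Sset a" "Xi' \<union> Xj' \<subseteq> Rset m \<union> Sset a"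
    using Q W unfolding Xi_def Xj_def Xi'_def Xj'_def by auto
  have "finite (Rset m \<union> Sset a)"
    by (simp add: Rset_def Sset_def)
  then have fin: "finite Xi" "finite Xj" "finite Xi'" "finite Xj'" "finite K"
    using X finite_P unfolding K_def by (auto intro: finite_subset)
  have "Xi' \<union> Xj' = Xi \<union> Xj"
    unfolding Xi_def Xj_def Xi'_def Xj'_def by blast
  moreover have "Xi' \<inter> Xj' = Xi \<inter> Xj"
    using Q W Rset_Int_Sset unfolding Xi_def Xj_def Xi'_def Xj'_def by blast
  ultimately have card_X: "card Xi' + card Xj' = card Xi + card Xj"
    using fin by (intro card_add_eq_if_Un_Int_eq)
  have avoid: "Cv i \<notin> X \<union> Y" "Cv j \<notin> X \<union> Y" if "X \<union> Y \<subseteq> Rset m \<union> Sset a" for X Y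
    using that by auto
  have "card (shift m a i j P) = card K + card Xi' + card Xj'"
    unfolding shift_eq using fin assms avoid[OF X(2)] by (intro card_Un_two_stars) (auto simp: K_def)
  also have "\<dots> = card K + card Xi + card Xj"
    using card_X by simp
  also have "\<dots> = card P"
    using fin assms avoid[OF X(1)] by (subst P_eq, intro card_Un_two_stars[symmetric]) (auto simp: K_def)
  finally show ?thesis .
qed

lemma two_cover_shift:
  assumes "1 \<le> i" "i < j" and cover: "two_cover m a P"
  shows "two_cover m a (shift m a i j P)"
  unfolding two_cover_def
proof
  fix e assume "e \<in> HY_edges m a"
  then obtain l x y where e: "e = {Rv l, Cv x, Sv y}"
    and bounds: "1 \<le> l" "l \<le> m" "1 \<le> x" "x \<le> a l" "1 \<le> y" "y \<le> a l"
    unfolding HY_edges_def by blast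
  let ?S = "shift m a i j P"
  have P_covers: "{Rv l, Sv y} \<in> P \<or> Sv y \<in> NQ a P (Cv z) \<or> Rv l \<in> NW m a P (Cv z)"
    if "1 \<le> z" "z \<le> a l" for z
  proof -
    have "{Rv l, Cv z, Sv y} \<in> HY_edges m a"
      unfolding HY_edges_def using bounds that by blast
    then obtain p where p: "p \<in> P" "p \<subseteq> {Rv l, Cv z, Sv y}"
      using cover unfolding two_cover_def by blast
    then show ?thesis
      by (elim mem_PE) (use p in \<open>auto simp: mem_NQ_iff mem_NW_iff\<close>)
  qed
  have L: "Rv l \<in> Lt m a j \<longleftrightarrow> a l < j"
    using bounds by (auto simp: Lt_def)
  have "{Rv l, Sv y} \<in> ?S \<or> {Cv x, Sv y} \<in> ?S \<or> {Rv l, Cv x} \<in> ?S"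
  proof (cases "x = i \<or> x = j")
    case False
    with P_covers[OF bounds(3,4)] show ?thesis
      by (auto simp: mem_NQ_iff mem_NW_iff intro: shift_memI(1))
  next
    case True
    have "i \<le> a l"
      using True bounds assms(2) by auto
    then have Pi: "{Rv l, Sv y} \<in> P \<or> Sv y \<in> NQ a P (Cv i) \<or> Rv l \<in> NW m a P (Cv i)"
      using P_covers assms(1) by blast
    have Pj: "{Rv l, Sv y} \<in> P \<or> Sv y \<in> NQ a P (Cv j) \<or> Rv l \<in> NW m a P (Cv j)"
      if "\<not> a l < j"
      using P_covers[of j] assms that by auto
    from True bounds consider "x = i" | "x = j" "\<not> a l < j"
      by fastforce
    then show ?thesis
    proof cases
      case 1
      have "{Rv l, Sv y} \<in> P \<or> Sv y \<in> NQ a P (Cv i) \<union> NQ a P (Cv j)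
          \<or> Rv l \<in> NW m a P (Cv i) \<inter> (NW m a P (Cv j) \<union> Lt m a j)"
        using Pi Pj L by blast
      then show ?thesis
        unfolding 1 by (blast intro: shift_memI)
    next
      case 2
      have "{Rv l, Sv y} \<in> P \<or> Sv y \<in> NQ a P (Cv i) \<inter> NQ a P (Cv j)
          \<or> Rv l \<in> NW m a P (Cv j) \<union> (NW m a P (Cv i) - Lt m a j)"
        using Pi Pj 2 L by blast
      then show ?thesis
        unfolding 2 by (blast intro: shift_memI)
    qed
  qed
  moreover have "{Rv l, Sv y} \<subseteq> e" "{Cv x, Sv y} \<subseteq> e" "{Rv l, Cv x} \<subseteq> e"
    unfolding e by auto
  ultimately show "\<exists>p \<in> ?S. p \<subseteq> e"
    by blast
qed

end

theorem lemma3: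
  fixes m :: nat and a :: "nat \<Rightarrow> nat" and P :: "vertex set set" and i j :: nat
  assumes young: "\<And>l l'. 1 \<le> l \<Longrightarrow> l \<le> l' \<Longrightarrow> l' \<le> m \<Longrightarrow> a l' \<le> a l"
    and P_sub: "P \<subseteq> pairs (Cset a) (Sset a) \<union> pairs (Rset m) (Sset a) \<union> pairs (Rset m) (Cset a)"
    and ij: "1 \<le> i" "i < j" "j \<le> a 1"
  shows "card (shift m a i j P) = card P
         \<and> (two_cover m a P \<longrightarrow> two_cover m a (shift m a i j P))"
proof -
  interpret tripartite_pairs m a P
    by (rule tripartite_pairs.intro) (fact P_sub)
  show ?thesis
    using card_shift two_cover_shift ij(1,2) by simp
qed

end
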